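(* Let $\mu$ be a probability measure on $\mathrm{Homeo}_+(\mathbb{R})$ with finite or countable support having the shiftability property. Then either $\phi_+(z)+\phi_-(z)=1$ for all $z\in\mathbb{R}$, or $\phi_+(z)+\phi_-(z)=0$ for all $z\in\mathbb{R}$; equivalently, either $\phi_0\equiv 0$ or $\phi_0\equiv 1$.
   Context: Setup. Let $\mu$ be a probability measure on the group $\mathrm{Homeo}_+(\mathbb{R})$ of orientation-preserving homeomorphisms of $\mathbb{R}$, supported on a finite or countable set $\{f_1,f_2,\dots\}$ with $p_i=\mu(\{f_i\})>0$, $\sum_i p_i=1$. Let $g_1,g_2,\dots$ be i.i.d. random maps with law $\mu$, and set $F_0=\mathrm{id}$, $F_n=g_n\circ\cdots\circ g_1$. For $x\in\mathbb{R}$ let $\phi_+(x)=\mathbb{P}(\lim_n F_n(x)=+\infty)$, $\phi_-(x)=\mathbb{P}(\lim_n F_n(x)=-\infty)$, $\phi_0(x)=1-\phi_+(x)-\phi_-(x)$. The system has the shiftability property if for every $x\in\mathbb{R}$ there exist $f,g$ with $\mu(\{f\})>0$, $\mu(\{g\})>0$ and $g(x)<x<f(x)$. *)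

theory Defs
  imports "HOL-Probability.Probability"
begin

text \<open>The countable support of mu is modelled by an index distribution nu on nat
  together with a labelling f of indices by homeomorphisms; mu is the push-forward
  of nu under f.\<close>

definition homeo_plus :: "(real \<Rightarrow> real) \<Rightarrow> bool" where
  "homeo_plus h \<longleftrightarrow> (\<exists>g. homeomorphism UNIV UNIV h g) \<and> strict_mono h"

text \<open>F_0 = id, F_(n+1) = g_(n+1) o F_n where g_(k+1) = f (omega !! k).\<close>
primrec walk :: "(nat \<Rightarrow> real \<Rightarrow> real) \<Rightarrow> nat stream \<Rightarrow> nat \<Rightarrow> real \<Rightarrow> real" where
  "walk f \<omega> 0 = id"
| "walk f \<omega> (Suc n) = f (\<omega> !! n) \<circ> walk f \<omega> n"

definition phi_plus :: "nat pmf \<Rightarrow> (nat \<Rightarrow> real \<Rightarrow> real) \<Rightarrow> real \<Rightarrow> real" where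
  "phi_plus \<nu> f x = measure (stream_space (measure_pmf \<nu>))
     {\<omega> \<in> space (stream_space (measure_pmf \<nu>)).
        filterlim (\<lambda>n. walk f \<omega> n x) at_top sequentially}"

definition phi_minus :: "nat pmf \<Rightarrow> (nat \<Rightarrow> real \<Rightarrow> real) \<Rightarrow> real \<Rightarrow> real" where
  "phi_minus \<nu> f x = measure (stream_space (measure_pmf \<nu>))
     {\<omega> \<in> space (stream_space (measure_pmf \<nu>)).
        filterlim (\<lambda>n. walk f \<omega> n x) at_bot sequentially}"

definition shiftable :: "nat pmf \<Rightarrow> (nat \<Rightarrow> real \<Rightarrow> real) \<Rightarrow> bool" where
  "shiftable \<nu> f \<longleftrightarrow> (\<forall>x. \<exists>i\<in>set_pmf \<nu>. \<exists>j\<in>set_pmf \<nu>. f j x < x \<and> x < f i x)"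

end

theory Submission
  imports Defs
begin

text \<open>Conjugating every map by \<open>x \<mapsto> -x\<close> exchanges \<open>\<phi>\<^sub>+\<close> and \<open>\<phi>\<^sub>-\<close>, so it suffices to show
  that \<open>\<phi>\<^sub>+(x\<^sub>0) > 0\<close> at a single point forces \<open>\<phi>\<^sub>+ + \<phi>\<^sub>- = 1\<close> everywhere. As the maps are
  increasing, \<open>\<phi>\<^sub>+\<close> is monotone, and by shiftability and continuity the up-set
  \<open>{\<phi>\<^sub>+ > 0}\<close> cannot have a finite infimum, so \<open>\<phi>\<^sub>+ > 0\<close> everywhere. Hence from every point
  above a level \<open>M\<close> the walk escapes to \<open>+\<infinity>\<close> with probability at least \<open>\<phi>\<^sub>+(M) > 0\<close>. A
  zero-one argument (approximate the event of non-escape by a cylinder set and apply the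
  Markov property at the first entrance times into \<open>[M, \<infinity>)\<close>) shows that a trajectory that
  does not tend to \<open>+\<infinity>\<close> visits \<open>[M, \<infinity>)\<close> only finitely often, for every \<open>M\<close>; that is,
  it tends to \<open>-\<infinity>\<close>.\<close>

section \<open>Approximation by a generating algebra\<close>

lemma (in finite_measure) measure_Diff_UN_lessThan_small:
  fixes A :: "nat \<Rightarrow> 'a set"
  assumes A: "range A \<subseteq> sets M" and e: "0 < e"
  shows "\<exists>K. measure M ((\<Union>i. A i) - (\<Union>i<K. A i)) < e"
proof -
  let ?U = "\<Union>i. A i" and ?UK = "\<lambda>K. \<Union>i<K. A i"
  have "(\<lambda>K. measure M (?UK K)) \<longlonglongrightarrow> measure M (\<Union>K. ?UK K)"
    using A by (intro finite_Lim_measure_incseq) (auto simp: incseq_def, force)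
  moreover have "(\<Union>K. ?UK K) = ?U" by blast
  ultimately have "\<forall>\<^sub>F K in sequentially. measure M ?U - e < measure M (?UK K)"
    using e by (auto intro: order_tendstoD(1))
  then obtain K where "measure M ?U - measure M (?UK K) < e"
    by (metis (lifting) diff_less_eq add.commute eventually_sequentially order_refl)
  moreover have "measure M (?U - ?UK K) = measure M ?U - measure M (?UK K)"
    using A by (intro finite_measure_Diff) auto
  ultimately show ?thesis by (intro exI[of _ K]) simp
qed

lemma (in finite_measure) approximation_UN:
  fixes A :: "nat \<Rightarrow> 'a set"
  assumes A: "range A \<subseteq> sets M"
    and \<C>: "\<C> \<subseteq> sets M" "{} \<in> \<C>" "\<And>C D. C \<in> \<C> \<Longrightarrow> D \<in> \<C> \<Longrightarrow> C \<union> D \<in> \<C>"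
    and approx: "\<And>i e. 0 < e \<Longrightarrow> \<exists>C\<in>\<C>. measure M (A i - C) + measure M (C - A i) < e"
    and e: "0 < e"
  shows "\<exists>C\<in>\<C>. measure M ((\<Union>i. A i) - C) + measure M (C - (\<Union>i. A i)) < e"
proof -
  let ?U = "\<Union>i. A i" and ?UK = "\<lambda>K. \<Union>i<K. A i"
  obtain K where tail: "measure M (?U - ?UK K) < e / 2"
    using measure_Diff_UN_lessThan_small[OF A, of "e / 2"] e by auto
  have "\<forall>i. \<exists>C\<in>\<C>. measure M (A i - C) + measure M (C - A i) < e / (2 * (K + 1))"
    using e by (intro allI approx) simp
  then obtain C where C: "\<And>i. C i \<in> \<C>"
    and err: "\<And>i. measure M (A i - C i) + measure M (C i - A i) < e / (2 * (K + 1))"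
    by metis
  have CM: "C i \<in> sets M" for i using C \<C>(1) by blast
  have "(\<Union>i<n. C i) \<in> \<C>" for n
    by (induction n) (auto simp: lessThan_Suc C \<C>(2,3))
  moreover
  have "measure M (?U - (\<Union>i<K. C i)) \<le> measure M (?U - ?UK K) + (\<Sum>i<K. measure M (A i - C i))"
  proof -
    have "measure M (?U - (\<Union>i<K. C i)) \<le> measure M ((?U - ?UK K) \<union> (\<Union>i<K. A i - C i))"
      using A CM by (intro finite_measure_mono) auto
    also have "\<dots> \<le> measure M (?U - ?UK K) + measure M (\<Union>i<K. A i - C i)"
      using A CM by (intro measure_Un_le) auto
    also have "measure M (\<Union>i<K. A i - C i) \<le> (\<Sum>i<K. measure M (A i - C i))"
      using A CM by (intro finite_measure_subadditive_finite) auto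
    finally show ?thesis by simp
  qed
  moreover have "measure M ((\<Union>i<K. C i) - ?U) \<le> (\<Sum>i<K. measure M (C i - A i))"
  proof -
    have "measure M ((\<Union>i<K. C i) - ?U) \<le> measure M (\<Union>i<K. C i - A i)"
      using A CM by (intro finite_measure_mono) auto
    also have "\<dots> \<le> (\<Sum>i<K. measure M (C i - A i))"
      using A CM by (intro finite_measure_subadditive_finite) auto
    finally show ?thesis .
  qed
  moreover have "(\<Sum>i<K. measure M (A i - C i)) + (\<Sum>i<K. measure M (C i - A i)) \<le> e / 2"
  proof -
    have "(\<Sum>i<K. measure M (A i - C i) + measure M (C i - A i)) \<le> (\<Sum>i<K. e / (2 * (K + 1)))"
      using err by (intro sum_mono less_imp_le)
    also have "\<dots> \<le> e / 2" using e by (simp add: field_simps)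
    finally show ?thesis by (simp add: sum.distrib)
  qed
  ultimately show ?thesis using tail by (intro bexI[of _ "\<Union>i<K. C i"]) auto
qed

lemma (in finite_measure) approximation_by_generating_algebra:
  assumes \<C>: "\<C> \<subseteq> sets M" "{} \<in> \<C>" "\<And>C. C \<in> \<C> \<Longrightarrow> space M - C \<in> \<C>"
      "\<And>C D. C \<in> \<C> \<Longrightarrow> D \<in> \<C> \<Longrightarrow> C \<union> D \<in> \<C>"
    and A: "A \<in> sigma_sets (space M) \<C>" and e: "0 < e"
  shows "\<exists>C\<in>\<C>. measure M (A - C) + measure M (C - A) < e"
proof -
  have sub: "\<C> \<subseteq> Pow (space M)" using \<C>(1) sets.sets_into_space by blast
  have "Int_stable \<C>"
  proof (rule Int_stableI)
    fix C D assume "C \<in> \<C>" "D \<in> \<C>"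
    moreover from this have "C \<inter> D = space M - ((space M - C) \<union> (space M - D))"
      using sub by blast
    ultimately show "C \<inter> D \<in> \<C>" using \<C>(3,4) by metis
  qed
  from this sub A have "\<forall>e>0. \<exists>C\<in>\<C>. measure M (A - C) + measure M (C - A) < e"
  proof (induction A rule: sigma_sets_induct_disjoint)
    case (basic A)
    then show ?case by (intro allI impI bexI[of _ A]) auto
  next
    case empty
    then show ?case using \<C>(2) by (intro allI impI bexI[of _ "{}"]) auto
  next
    case (compl A)
    have "(space M - A) - (space M - C) = C - A" "(space M - C) - (space M - A) = A - C" if "C \<in> \<C>" for C
      using that sub sigma_sets_into_sp[OF sub compl.hyps] by auto
    then show ?case using compl.IH \<C>(3) by (metis add.commute)
  next
    case (union A)
    have "range A \<subseteq> sets M"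
      using union.hyps(2) sets.sigma_sets_subset[OF \<C>(1)] sigma_sets_top[of "space M" \<C>] by auto
    then show ?case using \<C>(1,2,4) union.IH by (intro allI impI approximation_UN) auto
  qed
  then show ?thesis using e by blast
qed

section \<open>I.i.d. streams and cylinder sets\<close>

abbreviation iid_streams :: "'a pmf \<Rightarrow> 'a stream measure" where
  "iid_streams p \<equiv> stream_space (measure_pmf p)"

interpretation iid: prob_space "iid_streams p" for p :: "'a pmf"
  by (rule prob_space.prob_space_stream_space[OF prob_space_measure_pmf])

lemma space_iid_streams [simp]: "space (iid_streams p) = UNIV"
  by (simp add: space_stream_space)

lemma sets_iid_streams: "sets (iid_streams p) = sets (stream_space (count_space UNIV))"
  by (rule sets_stream_space_cong) simp

lemma measurable_stake_iid_streams [measurable]: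
  "stake n \<in> measurable (iid_streams (p :: 'a :: countable pmf)) (count_space UNIV)"
  using measurable_stake[where 'a='a] by (simp add: measurable_cong_sets[OF sets_iid_streams refl])

lemma measurable_comp_stake:
  assumes "range g \<subseteq> space N"
  shows "(\<lambda>\<omega>. g (stake n \<omega>)) \<in> measurable (iid_streams (p :: 'a :: countable pmf)) N"
proof -
  have "g \<in> measurable (count_space UNIV) N" using assms by (auto simp: measurable_def)
  then show ?thesis using measurable_compose[OF measurable_stake_iid_streams] by blast
qed

definition cylinder :: "nat \<Rightarrow> 'a list set \<Rightarrow> 'a stream set" where
  "cylinder n B = {\<omega>. stake n \<omega> \<in> B}"

lemma cylinder_in_sets [measurable]:
  "cylinder n B \<in> sets (iid_streams (p :: 'a :: countable pmf))"
proof -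
  have "(\<lambda>\<omega>. stake n \<omega> \<in> B) \<in> measurable (iid_streams p) (count_space UNIV)"
    by (rule measurable_comp_stake) simp
  then show ?thesis by (simp add: pred_def cylinder_def)
qed

lemma cylinder_lift: "m \<le> n \<Longrightarrow> cylinder m B = cylinder n {l. take m l \<in> B}"
  by (auto simp: cylinder_def take_stake min_absorb1)

lemma sets_iid_streams_generated_by_cylinders:
  "sets (iid_streams (p :: 'a :: countable pmf)) \<subseteq> sigma_sets UNIV (range (case_prod cylinder))"
proof -
  have "sets (iid_streams p) = sigma_sets UNIV (sstart UNIV ` lists UNIV \<union> {{}})"
    unfolding sets_iid_streams sets_stream_space_sstart[OF countableI_type, simplified]
    by (subst sets_measure_of) (auto simp: sstart_in_streams)
  also have "\<dots> \<subseteq> sigma_sets UNIV (range (case_prod cylinder))"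
  proof (rule sigma_sets_mono', safe)
    fix xs :: "'a list"
    have "sstart UNIV xs = cylinder (length xs) {xs}"
      by (auto simp: cylinder_def sstart_eq list_eq_iff_nth_eq)
    then show "sstart UNIV xs \<in> range (case_prod cylinder)" by auto
  next
    show "{} \<in> range (case_prod (cylinder :: nat \<Rightarrow> 'a list set \<Rightarrow> _))"
      by (rule image_eqI[of _ _ "(0, {})"]) (auto simp: cylinder_def)
  qed
  finally show ?thesis .
qed

lemma emeasure_stake_sdrop:
  fixes p :: "'a :: countable pmf"
  assumes "\<And>l. Y l \<in> sets (iid_streams p)"
  shows "emeasure (iid_streams p) {\<omega>. stake n \<omega> \<in> B \<and> sdrop n \<omega> \<in> Y (stake n \<omega>)} =
    (\<integral>\<^sup>+\<omega>. indicator B (stake n \<omega>) * emeasure (iid_streams p) (Y (stake n \<omega>)) \<partial>iid_streams p)"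
  using assms
proof (induction n arbitrary: B Y)
  case 0
  show ?case
    by (cases "[] \<in> B") (auto simp: iid.emeasure_space_1[simplified])
next
  case (Suc n)
  have [measurable]: "Y l \<in> sets (iid_streams p)" for l by fact
  let ?S = "{\<omega>. stake (Suc n) \<omega> \<in> B \<and> sdrop (Suc n) \<omega> \<in> Y (stake (Suc n) \<omega>)}"
  let ?g = "\<lambda>\<omega>. indicator B (stake (Suc n) \<omega>) * emeasure (iid_streams p) (Y (stake (Suc n) \<omega>))"
  have "?S \<in> sets (iid_streams p)"
  proof -
    have "Measurable.pred (iid_streams p) (\<lambda>\<omega>. (\<lambda>l \<omega>. l \<in> B \<and> sdrop (Suc n) \<omega> \<in> Y l) (stake (Suc n) \<omega>) \<omega>)"
      by (rule measurable_compose_countable[OF _ measurable_stake_iid_streams]) measurable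
    then show ?thesis by (simp add: pred_def)
  qed
  then have "emeasure (iid_streams p) ?S =
      (\<integral>\<^sup>+t. emeasure (iid_streams p) {\<omega>. stake n \<omega> \<in> {l. t # l \<in> B} \<and> sdrop n \<omega> \<in> Y (t # stake n \<omega>)} \<partial>p)"
    by (simp add: prob_space.emeasure_stream_space[OF prob_space_measure_pmf])
  also have "\<dots> = (\<integral>\<^sup>+t. (\<integral>\<^sup>+\<omega>. ?g (t ## \<omega>) \<partial>iid_streams p) \<partial>p)"
    by (subst Suc.IH) (auto simp: Suc.prems indicator_def intro!: nn_integral_cong)
  also have "\<dots> = (\<integral>\<^sup>+\<omega>. ?g \<omega> \<partial>iid_streams p)"
    by (rule prob_space.nn_integral_stream_space[OF prob_space_measure_pmf, symmetric])
       (rule measurable_comp_stake, simp)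
  finally show ?case .
qed

lemma emeasure_stake_sdrop_le:
  fixes p :: "'a :: countable pmf"
  assumes "\<And>l. Y l \<in> sets (iid_streams p)" and "\<And>l. l \<in> B \<Longrightarrow> emeasure (iid_streams p) (Y l) \<le> c"
  shows "emeasure (iid_streams p) {\<omega>. stake n \<omega> \<in> B \<and> sdrop n \<omega> \<in> Y (stake n \<omega>)} \<le>
    c * emeasure (iid_streams p) (cylinder n B)"
proof -
  have "emeasure (iid_streams p) {\<omega>. stake n \<omega> \<in> B \<and> sdrop n \<omega> \<in> Y (stake n \<omega>)} =
    (\<integral>\<^sup>+\<omega>. indicator B (stake n \<omega>) * emeasure (iid_streams p) (Y (stake n \<omega>)) \<partial>iid_streams p)"
    using assms(1) by (rule emeasure_stake_sdrop)
  also have "\<dots> \<le> (\<integral>\<^sup>+\<omega>. c * indicator (cylinder n B) \<omega> \<partial>iid_streams p)"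
    using assms(2) by (intro nn_integral_mono) (auto simp: indicator_def cylinder_def)
  also have "\<dots> = c * emeasure (iid_streams p) (cylinder n B)"
    by (rule nn_integral_cmult_indicator) simp
  finally show ?thesis .
qed

section \<open>A zero-one estimate\<close>

lemma cylinder_approximation:
  fixes p :: "'a :: countable pmf"
  assumes "A \<in> sets (iid_streams p)" and "0 < e"
  shows "\<exists>n B. measure (iid_streams p) (A - cylinder n B) + measure (iid_streams p) (cylinder n B - A) < e"
proof -
  have "\<exists>C\<in>range (case_prod cylinder). measure (iid_streams p) (A - C) + measure (iid_streams p) (C - A) < e"
  proof (rule iid.approximation_by_generating_algebra)
    show "{} \<in> range (case_prod cylinder)"
      by (rule image_eqI[of _ _ "(0, {})"]) (auto simp: cylinder_def)
    show "space (iid_streams p) - C \<in> range (case_prod cylinder)" if "C \<in> range (case_prod cylinder)" for C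
    proof -
      from that obtain n B where "C = cylinder n B" by auto
      then have "space (iid_streams p) - C = cylinder n (- B)" by (auto simp: cylinder_def)
      then show ?thesis by auto
    qed
    show "C \<union> D \<in> range (case_prod cylinder)"
      if "C \<in> range (case_prod cylinder)" "D \<in> range (case_prod cylinder)" for C D
    proof -
      from that obtain m B n B' where "C = cylinder m B" "D = cylinder n B'" by auto
      then have "C \<union> D = cylinder (max m n) ({l. take m l \<in> B} \<union> {l. take n l \<in> B'})"
        using cylinder_lift[of m "max m n" B] cylinder_lift[of n "max m n" B'] by (auto simp: cylinder_def)
      then show ?thesis by auto
    qed
    show "range (case_prod cylinder) \<subseteq> sets (iid_streams p)" by auto
    show "A \<in> sigma_sets (space (iid_streams p)) (range (case_prod cylinder))"
      using assms(1) sets_iid_streams_generated_by_cylinders by auto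
  qed fact
  then show ?thesis by auto
qed

definition first_entry :: "nat \<Rightarrow> (nat \<Rightarrow> 'a list set) \<Rightarrow> nat \<Rightarrow> 'a list set" where
  "first_entry N C n = {l \<in> C n. N \<le> n \<and> (\<forall>j\<in>{N..<n}. take j l \<notin> C j)}"

lemma disjoint_family_first_entry: "disjoint_family (\<lambda>n. cylinder n (first_entry N C n))"
proof -
  have "cylinder m (first_entry N C m) \<inter> cylinder n (first_entry N C n) = {}" if "m < n" for m n
  proof (intro equalityI subsetI)
    fix \<omega> assume "\<omega> \<in> cylinder m (first_entry N C m) \<inter> cylinder n (first_entry N C n)"
    then have "stake m \<omega> \<in> C m" "N \<le> m" "\<forall>j\<in>{N..<n}. take j (stake n \<omega>) \<notin> C j"
      by (simp_all add: cylinder_def first_entry_def)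
    then show "\<omega> \<in> {}" using that by (auto simp: take_stake)
  qed simp
  then show ?thesis
    unfolding disjoint_family_on_def by (metis Int_commute linorder_neqE_nat)
qed

lemma limsup_subset_first_entry:
  "limsup (\<lambda>n. cylinder n (C n)) \<subseteq> (\<Union>n. cylinder n (first_entry N C n))"
proof
  fix \<omega> assume "\<omega> \<in> limsup (\<lambda>n. cylinder n (C n))"
  then obtain n where n: "N \<le> n" "stake n \<omega> \<in> C n"
    by (auto simp: mem_limsup_iff frequently_sequentially cylinder_def)
  define n0 where "n0 = (LEAST n. N \<le> n \<and> stake n \<omega> \<in> C n)"
  have "N \<le> n0 \<and> stake n0 \<omega> \<in> C n0"
    unfolding n0_def by (rule LeastI[of _ n]) (use n in auto)
  moreover have "stake j \<omega> \<notin> C j" if "N \<le> j" "j < n0" for j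
    using not_less_Least[of j "\<lambda>n. N \<le> n \<and> stake n \<omega> \<in> C n"] that unfolding n0_def by blast
  ultimately have "\<omega> \<in> cylinder n0 (first_entry N C n0)"
    by (auto simp: cylinder_def first_entry_def take_stake)
  then show "\<omega> \<in> (\<Union>n. cylinder n (first_entry N C n))" by blast
qed

lemma measure_first_entries_le:
  fixes p :: "'a :: countable pmf" and N :: nat and C :: "nat \<Rightarrow> 'a list set" and c :: real
  defines "U \<equiv> \<Union>n. cylinder n (first_entry N C n)"
  assumes G: "G \<in> sets (iid_streams p)"
    and bound: "\<And>n B. B \<subseteq> C n \<Longrightarrow>
      measure (iid_streams p) (G \<inter> cylinder n B) \<le> c * measure (iid_streams p) (cylinder n B)"
  shows "measure (iid_streams p) (G \<inter> U) \<le>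
    c * measure (iid_streams p) (cylinder N B \<inter> U) + measure (iid_streams p) ((G - cylinder N B) \<inter> U)"
proof -
  let ?P = "measure (iid_streams p)" and ?H = "cylinder N B" and ?K = "\<lambda>n. cylinder n (first_entry N C n)"
  have sums: "(\<lambda>n. ?P (X \<inter> ?K n)) sums ?P (X \<inter> U)" if "X \<in> sets (iid_streams p)" for X
  proof -
    have "(\<lambda>n. ?P (X \<inter> ?K n)) sums ?P (\<Union>n. X \<inter> ?K n)"
      using that disjoint_family_first_entry[of N C]
      by (intro iid.finite_measure_UNION) (auto simp: disjoint_family_on_def)
    then show ?thesis by (simp add: U_def)
  qed
  have "?P (G \<inter> ?K n) \<le> c * ?P (?H \<inter> ?K n) + ?P ((G - ?H) \<inter> ?K n)" for n
  proof (cases "N \<le> n")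
    case False
    then have "first_entry N C n = {}" by (simp add: first_entry_def)
    then show ?thesis by (simp add: cylinder_def)
  next
    case True
    have "?H \<inter> ?K n = cylinder n {l \<in> first_entry N C n. take N l \<in> B}"
      unfolding cylinder_lift[OF True, of B] by (simp add: cylinder_def Collect_conj_eq Int_commute)
    moreover have "{l \<in> first_entry N C n. take N l \<in> B} \<subseteq> C n" by (auto simp: first_entry_def)
    ultimately have "?P (G \<inter> (?H \<inter> ?K n)) \<le> c * ?P (?H \<inter> ?K n)" using bound by simp
    moreover have "?P (G \<inter> ?K n) \<le> ?P (G \<inter> (?H \<inter> ?K n)) + ?P ((G - ?H) \<inter> ?K n)"
    proof -
      have "?P (G \<inter> ?K n) \<le> ?P ((G \<inter> (?H \<inter> ?K n)) \<union> ((G - ?H) \<inter> ?K n))"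
        using G by (intro iid.finite_measure_mono) auto
      also have "\<dots> \<le> ?P (G \<inter> (?H \<inter> ?K n)) + ?P ((G - ?H) \<inter> ?K n)"
        using G by (intro measure_Un_le) auto
      finally show ?thesis .
    qed
    ultimately show ?thesis by linarith
  qed
  moreover have "(\<lambda>n. c * ?P (?H \<inter> ?K n) + ?P ((G - ?H) \<inter> ?K n)) sums
      (c * ?P (?H \<inter> U) + ?P ((G - ?H) \<inter> U))"
    using G by (intro sums_add sums_mult sums) auto
  ultimately show ?thesis
    by (rule sums_le[OF _ sums[OF G]])
qed

text \<open>An elementary substitute for Levy's zero-one law. It is proved by approximating \<open>G\<close>
  by a cylinder of some length \<open>N\<close> and splitting at the first entrance time after \<open>N\<close>.\<close>

lemma limsup_cylinders_null:
  fixes p :: "'a :: countable pmf" and c :: real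
  assumes G: "G \<in> sets (iid_streams p)" and c: "0 \<le> c" "c < 1"
    and bound: "\<And>n B. B \<subseteq> C n \<Longrightarrow>
      measure (iid_streams p) (G \<inter> cylinder n B) \<le> c * measure (iid_streams p) (cylinder n B)"
  shows "G \<inter> limsup (\<lambda>n. cylinder n (C n)) \<in> null_sets (iid_streams p)"
proof -
  let ?P = "measure (iid_streams p)" and ?L = "G \<inter> limsup (\<lambda>n. cylinder n (C n))"
  have L: "?L \<in> sets (iid_streams p)" using G by (intro sets.Int measurable_limsup) auto
  have "(1 - c) * ?P ?L < e" if e: "0 < e" for e
  proof -
    obtain N B where approx: "?P (G - cylinder N B) + ?P (cylinder N B - G) < e"
      using cylinder_approximation[OF G e] by blast
    let ?H = "cylinder N B" and ?U = "\<Union>n. cylinder n (first_entry N C n)"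
    have U: "?U \<in> sets (iid_streams p)" by auto
    have "?P (G \<inter> ?U) \<le> c * ?P (?H \<inter> ?U) + ?P ((G - ?H) \<inter> ?U)"
      using G bound by (rule measure_first_entries_le)
    moreover have "?P (?H \<inter> ?U) \<le> ?P (G \<inter> ?U) + ?P (?H - G)"
    proof -
      have "?P (?H \<inter> ?U) \<le> ?P ((G \<inter> ?U) \<union> (?H - G))"
        using G U by (intro iid.finite_measure_mono) auto
      also have "\<dots> \<le> ?P (G \<inter> ?U) + ?P (?H - G)"
        using G U by (intro measure_Un_le) auto
      finally show ?thesis .
    qed
    moreover have "?P ((G - ?H) \<inter> ?U) \<le> ?P (G - ?H)"
      using G by (intro iid.finite_measure_mono) auto
    moreover have "c * ?P (?H - G) \<le> ?P (?H - G)"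
      using c by (intro mult_left_le_one_le) auto
    ultimately have "(1 - c) * ?P (G \<inter> ?U) \<le> ?P (?H - G) + ?P (G - ?H)"
      using mult_left_mono[of "?P (?H \<inter> ?U)" "?P (G \<inter> ?U) + ?P (?H - G)" c] c
      by (simp add: algebra_simps)
    moreover have "(1 - c) * ?P ?L \<le> (1 - c) * ?P (G \<inter> ?U)"
      using G U limsup_subset_first_entry[of C N] c
      by (intro mult_left_mono iid.finite_measure_mono) auto
    ultimately show ?thesis using approx by linarith
  qed
  from this[of "(1 - c) * ?P ?L"] have "(1 - c) * ?P ?L \<le> 0"
    by linarith
  then have "?P ?L = 0"
    using c by (simp add: mult_le_0_iff measure_le_0_iff)
  then show ?thesis using L by (simp add: iid.emeasure_eq_measure null_sets_def)
qed

section \<open>Random walks\<close>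

lemma walk_stake_shift: "m \<le> n \<Longrightarrow> walk f (stake n \<omega> @- \<omega>') m = walk f \<omega> m"
  by (induction m) (auto simp: shift_snth)

lemma measurable_walk [measurable]: "(\<lambda>\<omega>. walk f \<omega> n x) \<in> borel_measurable (iid_streams p)"
proof -
  have "(\<lambda>\<omega>. walk f (stake n \<omega> @- sconst 0) n x) \<in> borel_measurable (iid_streams p)"
    by (rule measurable_comp_stake) simp
  then show ?thesis by (simp add: walk_stake_shift)
qed

lemma walk_add: "walk f \<omega> (n + m) x = walk f (sdrop n \<omega>) m (walk f \<omega> n x)"
  by (induction m) (auto simp: sdrop_snth add.commute)

lemma walk_mono:
  assumes "\<And>k. k < n \<Longrightarrow> mono (f (\<omega> !! k))" and "x \<le> y"
  shows "walk f \<omega> n x \<le> walk f \<omega> n y"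
  using assms by (induction n) (auto simp: mono_def)

definition reflect :: "(nat \<Rightarrow> real \<Rightarrow> real) \<Rightarrow> nat \<Rightarrow> real \<Rightarrow> real" where
  "reflect f i x = - f i (- x)"

lemma reflect_reflect [simp]: "reflect (reflect f) = f"
  by (simp add: reflect_def fun_eq_iff)

lemma walk_reflect: "walk (reflect f) \<omega> n x = - walk f \<omega> n (- x)"
  by (induction n arbitrary: x) (auto simp: reflect_def)

lemma mono_reflect: "mono (f i) \<Longrightarrow> mono (reflect f i)"
  by (simp add: mono_def reflect_def)

lemma continuous_on_reflect:
  assumes "continuous_on UNIV (f i)"
  shows "continuous_on UNIV (reflect f i)"
proof -
  have "continuous_on UNIV (\<lambda>x. f i (- x))"
    by (rule continuous_on_compose2[OF assms]) (auto intro: continuous_intros)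
  then show ?thesis unfolding reflect_def by (rule continuous_on_minus)
qed

section \<open>Escape probabilities\<close>

definition escape_at_top :: "(nat \<Rightarrow> real \<Rightarrow> real) \<Rightarrow> real \<Rightarrow> nat stream set" where
  "escape_at_top f x = {\<omega>. filterlim (\<lambda>n. walk f \<omega> n x) at_top sequentially}"

definition escape_at_bot :: "(nat \<Rightarrow> real \<Rightarrow> real) \<Rightarrow> real \<Rightarrow> nat stream set" where
  "escape_at_bot f x = {\<omega>. filterlim (\<lambda>n. walk f \<omega> n x) at_bot sequentially}"

lemma escape_at_bot_eq_reflect: "escape_at_bot f x = escape_at_top (reflect f) (- x)"
  by (simp add: escape_at_bot_def escape_at_top_def walk_reflect filterlim_uminus_at_top)

lemma escape_at_top_disjoint_escape_at_bot: "escape_at_top f x \<inter> escape_at_bot f x = {}"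
proof safe
  fix \<omega> assume "\<omega> \<in> escape_at_top f x" "\<omega> \<in> escape_at_bot f x"
  then have "\<forall>\<^sub>F n in sequentially. 0 < walk f \<omega> n x" "\<forall>\<^sub>F n in sequentially. walk f \<omega> n x < 0"
    by (auto simp: escape_at_top_def escape_at_bot_def filterlim_at_top_dense filterlim_at_bot_dense)
  from eventually_conj[OF this] show "\<omega> \<in> {}" by (auto simp: eventually_sequentially)
qed

lemma escape_at_top_in_sets [measurable]: "escape_at_top f x \<in> sets (iid_streams p)"
proof -
  have "filterlim g at_top sequentially \<longleftrightarrow> (\<forall>m::nat. \<exists>N. \<forall>n\<ge>N. real m \<le> g n)" for g :: "nat \<Rightarrow> real"
  proof
    assume "\<forall>m::nat. \<exists>N. \<forall>n\<ge>N. real m \<le> g n"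
    then show "filterlim g at_top sequentially"
      unfolding filterlim_at_top eventually_sequentially by (meson order_trans real_arch_simple)
  qed (auto simp: filterlim_at_top eventually_sequentially)
  then have "escape_at_top f x = {\<omega>\<in>space (iid_streams p). \<forall>m::nat. \<exists>N. \<forall>n\<ge>N. real m \<le> walk f \<omega> n x}"
    by (simp add: escape_at_top_def)
  also have "\<dots> \<in> sets (iid_streams p)" by measurable
  finally show ?thesis .
qed

lemma escape_at_bot_in_sets [measurable]: "escape_at_bot f x \<in> sets (iid_streams p)"
  unfolding escape_at_bot_eq_reflect by (rule escape_at_top_in_sets)

lemma filterlim_sequentially_add_iff:
  "filterlim (\<lambda>m. g (m + n)) F sequentially \<longleftrightarrow> filterlim g F sequentially"
  unfolding filterlim_iff using eventually_sequentially_seg[where P = "\<lambda>m. P (g m)" for P] by blast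

lemma escape_at_top_sdrop: "\<omega> \<in> escape_at_top f x \<longleftrightarrow> sdrop n \<omega> \<in> escape_at_top f (walk f \<omega> n x)"
proof -
  have "filterlim (\<lambda>m. walk f (sdrop n \<omega>) m (walk f \<omega> n x)) at_top sequentially \<longleftrightarrow>
      filterlim (\<lambda>m. walk f \<omega> (m + n) x) at_top sequentially"
    by (simp only: walk_add[of f \<omega> n, symmetric] add.commute)
  also have "\<dots> \<longleftrightarrow> filterlim (\<lambda>m. walk f \<omega> m x) at_top sequentially"
    by (rule filterlim_sequentially_add_iff)
  finally show ?thesis by (simp add: escape_at_top_def)
qed

lemma phi_plus_eq_measure: "phi_plus \<nu> f x = measure (iid_streams \<nu>) (escape_at_top f x)"
  by (simp add: phi_plus_def escape_at_top_def)

lemma phi_minus_eq_measure: "phi_minus \<nu> f x = measure (iid_streams \<nu>) (escape_at_bot f x)"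
  by (simp add: phi_minus_def escape_at_bot_def)

lemma phi_minus_eq_phi_plus_reflect: "phi_minus \<nu> f x = phi_plus \<nu> (reflect f) (- x)"
  by (simp add: phi_minus_eq_measure phi_plus_eq_measure escape_at_bot_eq_reflect)

lemma phi_plus_eq_phi_minus_reflect: "phi_plus \<nu> f x = phi_minus \<nu> (reflect f) (- x)"
  by (simp add: phi_minus_eq_phi_plus_reflect)

lemma phi_plus_mono:
  assumes "\<And>i. i \<in> set_pmf \<nu> \<Longrightarrow> mono (f i)" and "x \<le> y"
  shows "phi_plus \<nu> f x \<le> phi_plus \<nu> f y"
proof -
  have "AE \<omega> in iid_streams \<nu>. stream_all (\<lambda>i. i \<in> set_pmf \<nu>) \<omega>"
    by (rule prob_space.AE_stream_all[OF prob_space_measure_pmf]) (auto simp: AE_measure_pmf)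
  then have "AE \<omega> in iid_streams \<nu>. \<omega> \<in> escape_at_top f x \<longrightarrow> \<omega> \<in> escape_at_top f y"
  proof (rule AE_mp, intro AE_I2 impI)
    fix \<omega> assume "stream_all (\<lambda>i. i \<in> set_pmf \<nu>) \<omega>" "\<omega> \<in> escape_at_top f x"
    moreover from this have "walk f \<omega> n x \<le> walk f \<omega> n y" for n
      using assms by (intro walk_mono) (auto simp: stream_all_def)
    ultimately show "\<omega> \<in> escape_at_top f y"
      unfolding escape_at_top_def by (auto intro: filterlim_at_top_mono)
  qed
  then have "emeasure (iid_streams \<nu>) (escape_at_top f x) \<le> emeasure (iid_streams \<nu>) (escape_at_top f y)"
    by (rule emeasure_mono_AE) simp
  then show ?thesis by (simp add: phi_plus_eq_measure iid.emeasure_eq_measure)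
qed

lemma phi_plus_ge_pmf: "pmf \<nu> i * phi_plus \<nu> f (f i x) \<le> phi_plus \<nu> f x"
proof -
  have "emeasure (iid_streams \<nu>) (escape_at_top f x) =
      (\<integral>\<^sup>+t. emeasure (iid_streams \<nu>) {\<omega>. t ## \<omega> \<in> escape_at_top f x} \<partial>\<nu>)"
    by (simp add: prob_space.emeasure_stream_space[OF prob_space_measure_pmf])
  also have "\<dots> = (\<integral>\<^sup>+t. emeasure (iid_streams \<nu>) (escape_at_top f (f t x)) \<partial>\<nu>)"
    using escape_at_top_sdrop[of "_ ## _" f x 1] by simp
  also have "\<dots> \<ge> (\<integral>\<^sup>+t. emeasure (iid_streams \<nu>) (escape_at_top f (f i x)) * indicator {i} t \<partial>\<nu>)"
    by (intro nn_integral_mono) (auto simp: indicator_def)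
  also have "(\<integral>\<^sup>+t. emeasure (iid_streams \<nu>) (escape_at_top f (f i x)) * indicator {i} t \<partial>\<nu>) =
      emeasure (iid_streams \<nu>) (escape_at_top f (f i x)) * pmf \<nu> i"
    by (simp add: nn_integral_cmult_indicator emeasure_pmf_single)
  finally show ?thesis
    by (simp add: phi_plus_eq_measure iid.emeasure_eq_measure mult.commute flip: ennreal_mult)
qed

text \<open>The set \<open>{\<phi>\<^sub>+ > 0}\<close> is an up-set. At a finite infimum \<open>a\<close>, a map with \<open>a < f i a\<close>
  sends points slightly below \<open>a\<close> into the set, and then \<open>phi_plus_ge_pmf\<close> puts those points
  in the set as well.\<close>

lemma phi_plus_pos_everywhere:
  assumes mono: "\<And>i. i \<in> set_pmf \<nu> \<Longrightarrow> mono (f i)"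
    and cont: "\<And>i. i \<in> set_pmf \<nu> \<Longrightarrow> continuous_on UNIV (f i)"
    and up: "\<And>x. \<exists>i\<in>set_pmf \<nu>. x < f i x"
    and pos: "0 < phi_plus \<nu> f x\<^sub>0"
  shows "0 < phi_plus \<nu> f y"
proof (rule ccontr)
  assume "\<not> 0 < phi_plus \<nu> f y"
  define P where "P = {x. 0 < phi_plus \<nu> f x}"
  have "y \<le> x" if "x \<in> P" for x
  proof (rule ccontr)
    assume "\<not> y \<le> x"
    then have "phi_plus \<nu> f x \<le> phi_plus \<nu> f y" using mono by (intro phi_plus_mono) auto
    with \<open>\<not> 0 < phi_plus \<nu> f y\<close> that show False by (simp add: P_def)
  qed
  then have bdd: "bdd_below P" by (auto simp: bdd_below_def)
  have "P \<noteq> {}" using pos by (auto simp: P_def)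
  define a where "a = Inf P"
  obtain i where i: "i \<in> set_pmf \<nu>" "a < f i a" using up by blast
  then obtain y' where y': "y' \<in> P" "y' < f i a"
    using cInf_less_iff[OF \<open>P \<noteq> {}\<close> bdd] by (auto simp: a_def)
  have "\<forall>\<^sub>F x in at a. y' < f i x"
    using cont[OF i(1)] y'(2)
    by (intro order_tendstoD(1)) (auto simp: continuous_on_eq_continuous_at continuous_at)
  then have "\<forall>\<^sub>F x in at_left a. y' < f i x \<and> x < a"
    using eventually_at_left_real[of "a - 1" a]
    by (simp add: eventually_at_split eventually_conj_iff eventually_mono)
  then obtain x where "x < a" "y' < f i x"
    using eventually_happens'[of "at_left a"] by auto
  have "phi_plus \<nu> f y' \<le> phi_plus \<nu> f (f i x)"
    using mono \<open>y' < f i x\<close> by (intro phi_plus_mono) auto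
  then have "0 < phi_plus \<nu> f (f i x)"
    using y'(1) by (simp add: P_def)
  then have "0 < pmf \<nu> i * phi_plus \<nu> f (f i x)"
    using i(1) by (simp add: pmf_positive)
  then have "x \<in> P"
    using phi_plus_ge_pmf[of \<nu> i f x] by (simp add: P_def)
  then show False
    using cInf_lower[OF _ bdd, of x] \<open>x < a\<close> by (simp add: a_def)
qed

lemma not_escape_at_top_limsup_above_null:
  assumes mono: "\<And>i. i \<in> set_pmf \<nu> \<Longrightarrow> mono (f i)" and pos: "0 < phi_plus \<nu> f M"
  shows "- escape_at_top f z \<inter> limsup (\<lambda>n. {\<omega>. M \<le> walk f \<omega> n z}) \<in> null_sets (iid_streams \<nu>)"
proof -
  let ?C = "\<lambda>n. {l. M \<le> walk f (l @- sconst 0) n z}" and ?c = "1 - phi_plus \<nu> f M"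
  have c: "0 \<le> ?c" "?c < 1" using pos by (auto simp: phi_plus_eq_measure)
  have compl: "emeasure (iid_streams \<nu>) (- escape_at_top f y) = ennreal (1 - phi_plus \<nu> f y)" for y
    using iid.prob_compl[of "escape_at_top f y" \<nu>]
    by (simp add: iid.emeasure_eq_measure phi_plus_eq_measure Compl_eq_Diff_UNIV)
  have "- escape_at_top f z \<inter> limsup (\<lambda>n. cylinder n (?C n)) \<in> null_sets (iid_streams \<nu>)"
  proof (rule limsup_cylinders_null)
    show "- escape_at_top f z \<in> sets (iid_streams \<nu>)"
      using sets.compl_sets[OF escape_at_top_in_sets] by (simp add: Compl_eq_Diff_UNIV)
    show "0 \<le> ?c" "?c < 1" by (fact c)+
  next
    fix n B assume B: "B \<subseteq> ?C n"
    have "- escape_at_top f z \<inter> cylinder n B =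
        {\<omega>. stake n \<omega> \<in> B \<and> sdrop n \<omega> \<in> - escape_at_top f (walk f (stake n \<omega> @- sconst 0) n z)}"
      using escape_at_top_sdrop[of _ f z n] by (auto simp: cylinder_def walk_stake_shift)
    also have "emeasure (iid_streams \<nu>) \<dots> \<le> ennreal ?c * emeasure (iid_streams \<nu>) (cylinder n B)"
    proof (rule emeasure_stake_sdrop_le)
      show "- escape_at_top f y \<in> sets (iid_streams \<nu>)" for y
        using sets.compl_sets[OF escape_at_top_in_sets] by (simp add: Compl_eq_Diff_UNIV)
      fix l assume "l \<in> B"
      with B have "phi_plus \<nu> f M \<le> phi_plus \<nu> f (walk f (l @- sconst 0) n z)"
        using mono by (intro phi_plus_mono) auto
      then show "emeasure (iid_streams \<nu>) (- escape_at_top f (walk f (l @- sconst 0) n z)) \<le> ennreal ?c"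
        by (simp add: compl ennreal_leI)
    qed
    finally show "measure (iid_streams \<nu>) (- escape_at_top f z \<inter> cylinder n B) \<le>
        ?c * measure (iid_streams \<nu>) (cylinder n B)"
      using c by (simp add: iid.emeasure_eq_measure ennreal_le_iff flip: ennreal_mult)
  qed
  moreover have "cylinder n (?C n) = {\<omega>. M \<le> walk f \<omega> n z}" for n
    by (simp add: cylinder_def walk_stake_shift)
  ultimately show ?thesis by simp
qed

lemma phi_plus_add_phi_minus_eq_1:
  assumes mono: "\<And>i. i \<in> set_pmf \<nu> \<Longrightarrow> mono (f i)" and pos: "\<And>y. 0 < phi_plus \<nu> f y"
  shows "phi_plus \<nu> f z + phi_minus \<nu> f z = 1"
proof -
  let ?E = "escape_at_top f z \<union> escape_at_bot f z"
  have sub: "- ?E \<subseteq> (\<Union>m::nat. - escape_at_top f z \<inter> limsup (\<lambda>n. {\<omega>. - real m \<le> walk f \<omega> n z}))"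
  proof
    fix \<omega> assume "\<omega> \<in> - ?E"
    then have "\<not> filterlim (\<lambda>n. walk f \<omega> n z) at_bot sequentially"
      by (simp add: escape_at_bot_def)
    then obtain Z where "\<not> (\<forall>\<^sub>F n in sequentially. walk f \<omega> n z \<le> Z)"
      unfolding filterlim_at_bot by blast
    then have Z: "\<exists>\<^sub>F n in sequentially. Z < walk f \<omega> n z"
      by (simp add: not_eventually not_le)
    obtain m :: nat where "- Z \<le> real m" using real_arch_simple by blast
    from Z have "\<exists>\<^sub>F n in sequentially. - real m \<le> walk f \<omega> n z"
      by (rule frequently_elim1) (use \<open>- Z \<le> real m\<close> in linarith)
    then have "\<omega> \<in> limsup (\<lambda>n. {\<omega>. - real m \<le> walk f \<omega> n z})"
      by (simp add: mem_limsup_iff)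
    with \<open>\<omega> \<in> - ?E\<close> show "\<omega> \<in> (\<Union>m::nat. - escape_at_top f z \<inter> limsup (\<lambda>n. {\<omega>. - real m \<le> walk f \<omega> n z}))"
      by blast
  qed
  have null: "(\<Union>m::nat. - escape_at_top f z \<inter> limsup (\<lambda>n. {\<omega>. - real m \<le> walk f \<omega> n z}))
      \<in> null_sets (iid_streams \<nu>)"
    using mono pos by (intro null_sets_UN not_escape_at_top_limsup_above_null)
  have E: "?E \<in> sets (iid_streams \<nu>)" by (intro sets.Un) measurable
  then have "- ?E \<in> sets (iid_streams \<nu>)"
    using sets.compl_sets[OF E] by (simp add: Compl_eq_Diff_UNIV)
  from null this sub have "- ?E \<in> null_sets (iid_streams \<nu>)"
    by (rule null_sets_subset)
  then have "measure (iid_streams \<nu>) ?E = 1"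
    using iid.prob_compl[OF E] by (simp add: Compl_eq_Diff_UNIV measure_def null_setsD1)
  moreover have "measure (iid_streams \<nu>) ?E =
      measure (iid_streams \<nu>) (escape_at_top f z) + measure (iid_streams \<nu>) (escape_at_bot f z)"
    using escape_at_top_disjoint_escape_at_bot by (intro iid.finite_measure_Union) auto
  ultimately show ?thesis by (simp add: phi_plus_eq_measure phi_minus_eq_measure)
qed

lemma shiftable_reflect: "shiftable \<nu> f \<Longrightarrow> shiftable \<nu> (reflect f)"
  unfolding shiftable_def reflect_def by (metis neg_less_iff_less minus_minus)

lemma phi_plus_add_phi_minus_eq_1_of_pos:
  assumes mono: "\<And>i. i \<in> set_pmf \<nu> \<Longrightarrow> mono (f i)"
    and cont: "\<And>i. i \<in> set_pmf \<nu> \<Longrightarrow> continuous_on UNIV (f i)"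
    and shift: "shiftable \<nu> f" and pos: "0 < phi_plus \<nu> f x\<^sub>0"
  shows "phi_plus \<nu> f z + phi_minus \<nu> f z = 1"
proof -
  have "\<exists>i\<in>set_pmf \<nu>. x < f i x" for x
    using shift by (auto simp: shiftable_def)
  with mono cont have "0 < phi_plus \<nu> f y" for y
    using pos by (rule phi_plus_pos_everywhere)
  with mono show ?thesis by (rule phi_plus_add_phi_minus_eq_1)
qed

theorem proposition3:
  fixes \<nu> :: "nat pmf" and f :: "nat \<Rightarrow> real \<Rightarrow> real"
  assumes "\<And>i. i \<in> set_pmf \<nu> \<Longrightarrow> homeo_plus (f i)"
    and "shiftable \<nu> f"
  shows "(\<forall>z. phi_plus \<nu> f z + phi_minus \<nu> f z = 1) \<or>
         (\<forall>z. phi_plus \<nu> f z + phi_minus \<nu> f z = 0)"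
proof (cases "\<exists>x\<^sub>0. 0 < phi_plus \<nu> f x\<^sub>0 \<or> 0 < phi_minus \<nu> f x\<^sub>0")
  case True
  then obtain x\<^sub>0 where x\<^sub>0: "0 < phi_plus \<nu> f x\<^sub>0 \<or> 0 < phi_plus \<nu> (reflect f) (- x\<^sub>0)"
    by (auto simp: phi_minus_eq_phi_plus_reflect)
  have mono: "mono (f i)" and cont: "continuous_on UNIV (f i)" if "i \<in> set_pmf \<nu>" for i
    using assms(1)[OF that] by (auto simp: homeo_plus_def homeomorphism_def strict_mono_mono)
  have "phi_plus \<nu> f z + phi_minus \<nu> f z = 1" for z
    using x\<^sub>0
  proof
    assume "0 < phi_plus \<nu> (reflect f) (- x\<^sub>0)"
    with mono_reflect[OF mono] continuous_on_reflect[OF cont] shiftable_reflect[OF assms(2)]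
    have "phi_plus \<nu> (reflect f) (- z) + phi_minus \<nu> (reflect f) (- z) = 1"
      by (rule phi_plus_add_phi_minus_eq_1_of_pos)
    then show ?thesis
      using phi_plus_eq_phi_minus_reflect[of \<nu> f z] phi_minus_eq_phi_plus_reflect[of \<nu> f z] by simp
  qed (rule phi_plus_add_phi_minus_eq_1_of_pos[OF mono cont assms(2)])
  then show ?thesis by blast
next
  case False
  have "0 \<le> phi_plus \<nu> f z" "0 \<le> phi_minus \<nu> f z" for z
    by (simp_all add: phi_plus_eq_measure phi_minus_eq_measure)
  with False show ?thesis by (metis add.right_neutral order_antisym not_less)
qed

end
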